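(* Let $n\ge3$, $a_0\in\mathbb{R}$, $a\in\mathbb{R}^n$ with $a_0+a^\top x>0$ for all $x\in\{0,1\}^n$. Let $I=\{i,j\}\subseteq[n]$ with $i\ne j$. Then $\operatorname{conv}(\mathcal{G}_I)$ equals the set of all $(\rho,y,x_i,x_j)\in\mathbb{R}\times\mathbb{R}^n\times\mathbb{R}\times\mathbb{R}$ for which there exists $w=(w_{uv})_{\{u,v\}\in E(I)}$ such that: (a) for every $\{u,v\}\in E(I)$: $w_{uv}\ge0$, $y_u+y_v-w_{uv}\le\rho$, $w_{uv}\le y_u$, $w_{uv}\le y_v$; (b) for every $k\in[n]\setminus\{i,j\}$: $y_i+y_j+y_k-w_{ij}-w_{jk}-w_{ik}\le\rho$, $-y_i+w_{ij}+w_{ik}-w_{jk}\le0$, $-y_j+w_{ij}-w_{ik}+w_{jk}\le0$, $-y_k-w_{ij}+w_{ik}+w_{jk}\le0$; (c) $\rho\ge0$ and $a_0\rho+a^\top y=1$; (d) $x_u=(a_0+a_u)y_u+\sum_{v\in[n]\setminus\{u\}}a_vw_{uv}$ for $u\in\{i,j\}$. Consequently the 2-term relaxation of the linear fractional polytope is the intersection over all such $I$ of these sets (each extended to the space of $(\rho,y,x)$).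
   Context: For $I\subseteq[n]$, $\mathcal{G}_I=\bigl\{\bigl(\frac{1}{a_0+a^\top x},\frac{x}{a_0+a^\top x},(x_i)_{i\in I}\bigr)\bigm| x\in\{0,1\}^n\bigr\}$. The linear fractional polytope is $\operatorname{conv}(\mathcal{G}_{[n]})$, and its $k$-term relaxation is $\bigcap_{I\subseteq[n],|I|=k}\operatorname{conv}(\mathcal{G}_I)$, where each $\operatorname{conv}(\mathcal{G}_I)$ is extended to the space of $(\rho,y,x)\in\mathbb{R}\times\mathbb{R}^n\times\mathbb{R}^n$ by leaving the coordinates $x_l$, $l\notin I$, free. $E(I)$ is the set of unordered pairs $\{u,v\}$ of distinct elements of $[n]$ with $u\in I$ or $v\in I$; $w_{uv}=w_{vu}$ denotes the variable of the pair $\{u,v\}$. *)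

theory Defs
  imports "HOL-Analysis.Analysis"
begin

text \<open>Index set [n] is the finite type 'n (n = CARD('n)); vectors in R^n are real^'n.\<close>

definition binary_points :: "(real^'n) set" where
  "binary_points = {x. \<forall>k. x $ k \<in> {0, 1}}"

definition G2 :: "real \<Rightarrow> real^'n \<Rightarrow> 'n \<Rightarrow> 'n \<Rightarrow> (real \<times> (real^'n) \<times> real \<times> real) set" where
  "G2 a0 a i j = (\<lambda>x. (1 / (a0 + a \<bullet> x), (1 / (a0 + a \<bullet> x)) *\<^sub>R x, x $ i, x $ j)) ` binary_points"

definition E :: "'n set \<Rightarrow> 'n set set" where
  "E I = {{u, v} | u v. u \<noteq> v \<and> (u \<in> I \<or> v \<in> I)}"

text \<open>The set described in the corollary; w_{uv} is w {u,v} (so w_{uv} = w_{vu}).\<close>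
definition S2 :: "real \<Rightarrow> real^'n \<Rightarrow> 'n \<Rightarrow> 'n \<Rightarrow> (real \<times> (real^'n) \<times> real \<times> real) set" where
  "S2 a0 a i j = {(\<rho>, y, xi, xj). \<exists>w :: 'n set \<Rightarrow> real.
     (\<forall>u v. {u, v} \<in> E {i, j} \<longrightarrow>
        w {u, v} \<ge> 0 \<and> y $ u + y $ v - w {u, v} \<le> \<rho> \<and>
        w {u, v} \<le> y $ u \<and> w {u, v} \<le> y $ v) \<and>
     (\<forall>k. k \<notin> {i, j} \<longrightarrow>
        y $ i + y $ j + y $ k - w {i, j} - w {j, k} - w {i, k} \<le> \<rho> \<and>
        - y $ i + w {i, j} + w {i, k} - w {j, k} \<le> 0 \<and>
        - y $ j + w {i, j} - w {i, k} + w {j, k} \<le> 0 \<and>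
        - y $ k - w {i, j} + w {i, k} + w {j, k} \<le> 0) \<and>
     \<rho> \<ge> 0 \<and> a0 * \<rho> + a \<bullet> y = 1 \<and>
     xi = (a0 + a $ i) * y $ i + (\<Sum>v\<in>UNIV - {i}. a $ v * w {i, v}) \<and>
     xj = (a0 + a $ j) * y $ j + (\<Sum>v\<in>UNIV - {j}. a $ v * w {j, v})}"

definition extend2 :: "'n \<Rightarrow> 'n \<Rightarrow> (real \<times> (real^'n) \<times> real \<times> real) set \<Rightarrow> (real \<times> (real^'n) \<times> (real^'n)) set" where
  "extend2 i j S = {(\<rho>, y, x). (\<rho>, y, x $ i, x $ j) \<in> S}"

definition two_term_relaxation :: "real \<Rightarrow> real^'n \<Rightarrow> (real \<times> (real^'n) \<times> (real^'n)) set" where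
  "two_term_relaxation a0 a = \<Inter> {extend2 i j (convex hull (G2 a0 a i j)) | i j. i \<noteq> j}"

end

theory Submission
  imports Defs
begin

text \<open>
  Multiplying a point of \<open>G\<^sub>I\<close> by \<open>a\<^sub>0 + a\<^sup>Tx\<close> gives \<open>(1, x, x\<^sub>i(a\<^sub>0 + a\<^sup>Tx), x\<^sub>j(a\<^sub>0 + a\<^sup>Tx))\<close>,
  and \<open>G\<^sub>I\<close> is recovered by dividing by the linear form \<open>a\<^sub>0\<rho> + a\<^sup>Ty\<close>; this perspective map
  sends conic combinations of lifted points with value 1 into \<open>conv G\<^sub>I\<close>.
  The set of the corollary contains \<open>G\<^sub>I\<close> (take \<open>w\<^sub>u\<^sub>v = \<rho> x\<^sub>u x\<^sub>v\<close>) and is convex.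
  Conversely, read \<open>(\<rho>, y, w)\<close> as the moments of a measure on the cube: the McCormick
  inequalities of the pair \<open>{i, j}\<close> split \<open>\<rho>\<close> into the masses of the four events
  \<open>(x\<^sub>i, x\<^sub>j) = s\<close>, and for every other \<open>k\<close> the triangle inequalities leave room for a cubic
  moment \<open>w\<^sub>i\<^sub>j\<^sub>k\<close> making all eight atoms on \<open>{0,1}\<^sup>3\<close> nonnegative.  This gives for each
  \<open>s\<close> a conditional first moment lying in the face of the cube where \<open>(x\<^sub>i, x\<^sub>j) = s\<close>; on that
  face the lifted point is affine in \<open>x\<close>, so each of the four pieces lies in the cone over the
  lifted points, and their sum is the given point.
\<close>

definition mccormick_ineqs :: "real \<Rightarrow> real \<Rightarrow> real \<Rightarrow> real \<Rightarrow> bool" where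
  "mccormick_ineqs \<rho> yu yv wuv \<longleftrightarrow> wuv \<ge> 0 \<and> yu + yv - wuv \<le> \<rho> \<and> wuv \<le> yu \<and> wuv \<le> yv"

definition triangle_ineqs :: "real \<Rightarrow> real \<Rightarrow> real \<Rightarrow> real \<Rightarrow> real \<Rightarrow> real \<Rightarrow> real \<Rightarrow> bool" where
  "triangle_ineqs \<rho> yi yj yk wij wjk wik \<longleftrightarrow>
     yi + yj + yk - wij - wjk - wik \<le> \<rho> \<and> - yi + wij + wik - wjk \<le> 0 \<and>
     - yj + wij - wik + wjk \<le> 0 \<and> - yk - wij + wik + wjk \<le> 0"

text \<open>Row \<open>i\<close> of the moment matrix (\<open>y\<^sub>i\<close> on the diagonal, \<open>w\<^sub>i\<^sub>k\<close> off it), so that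
  condition (d) reads \<open>x\<^sub>i = a\<^sub>0 y\<^sub>i + a\<^sup>T Y\<^sub>i\<close>.\<close>
definition moment_row :: "real^'n \<Rightarrow> ('n set \<Rightarrow> real) \<Rightarrow> 'n \<Rightarrow> real^'n" where
  "moment_row y w i = (\<chi> k. if k = i then y $ i else w {i, k})"

definition extended_form ::
    "real \<Rightarrow> real^'n \<Rightarrow> 'n \<Rightarrow> 'n \<Rightarrow> real \<Rightarrow> real^'n \<Rightarrow> real \<Rightarrow> real \<Rightarrow> ('n set \<Rightarrow> real) \<Rightarrow> bool"
  where "extended_form a0 a i j \<rho> y xi xj w \<longleftrightarrow>
     (\<forall>u v. {u, v} \<in> E {i, j} \<longrightarrow> mccormick_ineqs \<rho> (y $ u) (y $ v) (w {u, v})) \<and>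
     (\<forall>k. k \<notin> {i, j} \<longrightarrow> triangle_ineqs \<rho> (y $ i) (y $ j) (y $ k) (w {i, j}) (w {j, k}) (w {i, k})) \<and>
     \<rho> \<ge> 0 \<and> a0 * \<rho> + a \<bullet> y = 1 \<and>
     xi = a0 * y $ i + a \<bullet> moment_row y w i \<and> xj = a0 * y $ j + a \<bullet> moment_row y w j"

lemma inner_moment_row:
  "a \<bullet> moment_row y w i = a $ i * y $ i + (\<Sum>v\<in>UNIV - {i}. a $ v * w {i, v})"
proof -
  have "a \<bullet> moment_row y w i = (\<Sum>v\<in>UNIV. a $ v * moment_row y w i $ v)"
    by (simp add: inner_vec_def)
  also have "\<dots> = a $ i * y $ i + (\<Sum>v\<in>UNIV - {i}. a $ v * w {i, v})"
    by (subst sum.remove[of _ i]) (auto simp: moment_row_def intro!: sum.cong)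
  finally show ?thesis .
qed

lemma mem_S2_iff:
  "(\<rho>, y, xi, xj) \<in> S2 a0 a i j \<longleftrightarrow> (\<exists>w. extended_form a0 a i j \<rho> y xi xj w)"
  by (simp add: S2_def extended_form_def mccormick_ineqs_def triangle_ineqs_def inner_moment_row algebra_simps)

lemma convex_comb_le:
  fixes u v :: real
  shows "A1 \<le> B1 \<Longrightarrow> A2 \<le> B2 \<Longrightarrow> 0 \<le> u \<Longrightarrow> 0 \<le> v \<Longrightarrow> u * A1 + v * A2 \<le> u * B1 + v * B2"
  by (intro add_mono mult_left_mono)

lemma mccormick_ineqs_convex_comb:
  fixes u v :: real
  assumes "mccormick_ineqs \<rho>1 yu1 yv1 w1" "mccormick_ineqs \<rho>2 yu2 yv2 w2" "0 \<le> u" "0 \<le> v"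
  shows "mccormick_ineqs (u * \<rho>1 + v * \<rho>2) (u * yu1 + v * yu2) (u * yv1 + v * yv2) (u * w1 + v * w2)"
  using assms convex_comb_le[of 0 w1 0 w2 u v] convex_comb_le[of w1 yu1 w2 yu2 u v]
    convex_comb_le[of w1 yv1 w2 yv2 u v] convex_comb_le[of "yu1 + yv1 - w1" \<rho>1 "yu2 + yv2 - w2" \<rho>2 u v]
  unfolding mccormick_ineqs_def distrib_left right_diff_distrib by linarith

lemma triangle_ineqs_convex_comb:
  fixes u v :: real
  assumes "triangle_ineqs \<rho>1 yi1 yj1 yk1 wij1 wjk1 wik1" "triangle_ineqs \<rho>2 yi2 yj2 yk2 wij2 wjk2 wik2"
    "0 \<le> u" "0 \<le> v"
  shows "triangle_ineqs (u * \<rho>1 + v * \<rho>2) (u * yi1 + v * yi2) (u * yj1 + v * yj2) (u * yk1 + v * yk2)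
    (u * wij1 + v * wij2) (u * wjk1 + v * wjk2) (u * wik1 + v * wik2)"
  using assms
    convex_comb_le[of "yi1 + yj1 + yk1 - wij1 - wjk1 - wik1" \<rho>1 "yi2 + yj2 + yk2 - wij2 - wjk2 - wik2" \<rho>2 u v]
    convex_comb_le[of "wij1 + wik1 - wjk1" yi1 "wij2 + wik2 - wjk2" yi2 u v]
    convex_comb_le[of "wij1 + wjk1 - wik1" yj1 "wij2 + wjk2 - wik2" yj2 u v]
    convex_comb_le[of "wik1 + wjk1 - wij1" yk1 "wik2 + wjk2 - wij2" yk2 u v]
  unfolding triangle_ineqs_def distrib_left right_diff_distrib by linarith

lemma extended_form_convex_comb:
  fixes u v :: real
  assumes 1: "extended_form a0 a i j \<rho>1 y1 xi1 xj1 w1" and 2: "extended_form a0 a i j \<rho>2 y2 xi2 xj2 w2"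
    and u: "0 \<le> u" and v: "0 \<le> v" and "u + v = 1"
  shows "extended_form a0 a i j (u * \<rho>1 + v * \<rho>2) (u *\<^sub>R y1 + v *\<^sub>R y2)
     (u * xi1 + v * xi2) (u * xj1 + v * xj2) (\<lambda>A. u * w1 A + v * w2 A)"
  unfolding extended_form_def
proof (intro conjI allI impI)
  fix p q assume "{p, q} \<in> E {i, j}"
  then have "mccormick_ineqs \<rho>1 (y1 $ p) (y1 $ q) (w1 {p, q})" "mccormick_ineqs \<rho>2 (y2 $ p) (y2 $ q) (w2 {p, q})"
    using 1 2 unfolding extended_form_def by blast+
  from mccormick_ineqs_convex_comb[OF this u v]
  show "mccormick_ineqs (u * \<rho>1 + v * \<rho>2) ((u *\<^sub>R y1 + v *\<^sub>R y2) $ p)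
      ((u *\<^sub>R y1 + v *\<^sub>R y2) $ q) (u * w1 {p, q} + v * w2 {p, q})"
    by simp
next
  fix k assume "k \<notin> {i, j}"
  then have "triangle_ineqs \<rho>1 (y1 $ i) (y1 $ j) (y1 $ k) (w1 {i, j}) (w1 {j, k}) (w1 {i, k})"
    "triangle_ineqs \<rho>2 (y2 $ i) (y2 $ j) (y2 $ k) (w2 {i, j}) (w2 {j, k}) (w2 {i, k})"
    using 1 2 unfolding extended_form_def by blast+
  from triangle_ineqs_convex_comb[OF this u v]
  show "triangle_ineqs (u * \<rho>1 + v * \<rho>2) ((u *\<^sub>R y1 + v *\<^sub>R y2) $ i)
      ((u *\<^sub>R y1 + v *\<^sub>R y2) $ j) ((u *\<^sub>R y1 + v *\<^sub>R y2) $ k)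
      (u * w1 {i, j} + v * w2 {i, j}) (u * w1 {j, k} + v * w2 {j, k}) (u * w1 {i, k} + v * w2 {i, k})"
    by simp
next
  have "0 \<le> \<rho>1" "0 \<le> \<rho>2" "a0 * \<rho>1 + a \<bullet> y1 = 1" "a0 * \<rho>2 + a \<bullet> y2 = 1"
    "xi1 = a0 * y1 $ i + a \<bullet> moment_row y1 w1 i" "xj1 = a0 * y1 $ j + a \<bullet> moment_row y1 w1 j"
    "xi2 = a0 * y2 $ i + a \<bullet> moment_row y2 w2 i" "xj2 = a0 * y2 $ j + a \<bullet> moment_row y2 w2 j"
    using 1 2 unfolding extended_form_def by blast+
  moreover have "moment_row (u *\<^sub>R y1 + v *\<^sub>R y2) (\<lambda>A. u * w1 A + v * w2 A) l
      = u *\<^sub>R moment_row y1 w1 l + v *\<^sub>R moment_row y2 w2 l" for l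
    by (simp add: moment_row_def vec_eq_iff)
  moreover have "a0 * (u * \<rho>1 + v * \<rho>2) + a \<bullet> (u *\<^sub>R y1 + v *\<^sub>R y2)
      = u * (a0 * \<rho>1 + a \<bullet> y1) + v * (a0 * \<rho>2 + a \<bullet> y2)"
    by (simp add: inner_add_right algebra_simps)
  ultimately show "0 \<le> u * \<rho>1 + v * \<rho>2"
    "a0 * (u * \<rho>1 + v * \<rho>2) + a \<bullet> (u *\<^sub>R y1 + v *\<^sub>R y2) = 1"
    "u * xi1 + v * xi2 = a0 * (u *\<^sub>R y1 + v *\<^sub>R y2) $ i
      + a \<bullet> moment_row (u *\<^sub>R y1 + v *\<^sub>R y2) (\<lambda>A. u * w1 A + v * w2 A) i"
    "u * xj1 + v * xj2 = a0 * (u *\<^sub>R y1 + v *\<^sub>R y2) $ j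
      + a \<bullet> moment_row (u *\<^sub>R y1 + v *\<^sub>R y2) (\<lambda>A. u * w1 A + v * w2 A) j"
    using u v \<open>u + v = 1\<close> by (simp_all add: inner_add_right algebra_simps)
qed

lemma convex_S2: "convex (S2 a0 a i j)"
proof (rule convexI, clarify)
  fix \<rho>1 y1 xi1 xj1 \<rho>2 y2 xi2 xj2 and u v :: real
  assume "(\<rho>1, y1, xi1, xj1) \<in> S2 a0 a i j" "(\<rho>2, y2, xi2, xj2) \<in> S2 a0 a i j"
    and uv: "0 \<le> u" "0 \<le> v" "u + v = 1"
  then obtain w1 w2 where "extended_form a0 a i j \<rho>1 y1 xi1 xj1 w1" "extended_form a0 a i j \<rho>2 y2 xi2 xj2 w2"
    unfolding mem_S2_iff by blast
  from extended_form_convex_comb[OF this uv]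
  show "u *\<^sub>R (\<rho>1, y1, xi1, xj1) + v *\<^sub>R (\<rho>2, y2, xi2, xj2) \<in> S2 a0 a i j"
    unfolding scaleR_Pair add_Pair real_scaleR_def mem_S2_iff by blast
qed

lemma mccormick_ineqs_binary:
  "0 \<le> r \<Longrightarrow> s \<in> {0, 1} \<Longrightarrow> t \<in> {0, 1} \<Longrightarrow> mccormick_ineqs r (r * s) (r * t) (r * (s * t))"
  by (auto simp: mccormick_ineqs_def)

lemma triangle_ineqs_binary:
  "0 \<le> r \<Longrightarrow> s \<in> {0, 1} \<Longrightarrow> t \<in> {0, 1} \<Longrightarrow> q \<in> {0, 1} \<Longrightarrow>
    triangle_ineqs r (r * s) (r * t) (r * q) (r * (s * t)) (r * (t * q)) (r * (s * q))"
  by (auto simp: triangle_ineqs_def)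

lemma extended_form_binary_point:
  fixes a :: "real^'n"
  assumes x: "x \<in> binary_points" and "0 < a0 + a \<bullet> x" and "i \<noteq> j"
  defines "r \<equiv> 1 / (a0 + a \<bullet> x)"
  shows "extended_form a0 a i j r (r *\<^sub>R x) (x $ i) (x $ j) (\<lambda>A. r * (\<Prod>k\<in>A. x $ k))"
proof -
  define w where "w A = r * (\<Prod>k\<in>A. x $ k)" for A :: "'n set"
  have r: "0 < r" "r * (a0 + a \<bullet> x) = 1"
    using \<open>0 < a0 + a \<bullet> x\<close> by (simp_all add: r_def)
  have bin: "x $ k \<in> {0, 1}" for k
    using x by (simp add: binary_points_def)
  have w_pair: "w {u, v} = r * (x $ u * x $ v)" if "u \<noteq> v" for u v
    using that by (simp add: w_def)
  have mccormick: "mccormick_ineqs r ((r *\<^sub>R x) $ u) ((r *\<^sub>R x) $ v) (w {u, v})"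
    if "{u, v} \<in> E {i, j}" for u v
  proof -
    have "u \<noteq> v"
      using that by (auto simp: E_def doubleton_eq_iff)
    then show ?thesis
      using r(1) bin by (simp add: w_pair mccormick_ineqs_binary)
  qed
  have triangle: "triangle_ineqs r ((r *\<^sub>R x) $ i) ((r *\<^sub>R x) $ j) ((r *\<^sub>R x) $ k)
      (w {i, j}) (w {j, k}) (w {i, k})" if "k \<notin> {i, j}" for k
  proof -
    have "i \<noteq> k" "j \<noteq> k"
      using that by auto
    then show ?thesis
      using \<open>i \<noteq> j\<close> r(1) bin by (simp add: w_pair triangle_ineqs_binary)
  qed
  have row: "moment_row (r *\<^sub>R x) w l = (r * x $ l) *\<^sub>R x" for l
    using bin[of l] by (auto simp: moment_row_def w_def vec_eq_iff)
  have proj: "x $ l = a0 * (r *\<^sub>R x) $ l + a \<bullet> moment_row (r *\<^sub>R x) w l" for l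
  proof -
    have "a0 * (r *\<^sub>R x) $ l + a \<bullet> moment_row (r *\<^sub>R x) w l = x $ l * (r * (a0 + a \<bullet> x))"
      unfolding row by (simp add: algebra_simps)
    then show ?thesis
      using r(2) by simp
  qed
  have "a0 * r + a \<bullet> (r *\<^sub>R x) = 1"
    using r(2) by (simp add: algebra_simps)
  then show ?thesis
    unfolding extended_form_def w_def[symmetric] using mccormick triangle proj less_imp_le[OF r(1)] by blast
qed

lemma G2_subset_S2:
  fixes a :: "real^'n"
  assumes pos: "\<forall>x\<in>binary_points. a0 + a \<bullet> x > 0" and "i \<noteq> j"
  shows "G2 a0 a i j \<subseteq> S2 a0 a i j"
proof
  fix p assume "p \<in> G2 a0 a i j"
  then obtain x where x: "x \<in> binary_points"
    and p: "p = (1 / (a0 + a \<bullet> x), (1 / (a0 + a \<bullet> x)) *\<^sub>R x, x $ i, x $ j)"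
    unfolding G2_def by blast
  have "0 < a0 + a \<bullet> x"
    using pos x by blast
  from extended_form_binary_point[OF x this \<open>i \<noteq> j\<close>]
  show "p \<in> S2 a0 a i j"
    unfolding p mem_S2_iff by blast
qed

lemma convex_hull_G2_subset_S2:
  assumes "\<forall>x\<in>binary_points. a0 + a \<bullet> x > 0" and "i \<noteq> j"
  shows "convex hull (G2 a0 a i j) \<subseteq> S2 a0 a i j"
  using assms by (intro hull_minimal G2_subset_S2 convex_S2)

text \<open>The point of \<open>G\<^sub>I\<close> generated by \<open>z\<close>, multiplied by \<open>a\<^sub>0 + a\<^sup>Tz\<close>.\<close>
definition lift_point :: "real \<Rightarrow> real^'n \<Rightarrow> 'n \<Rightarrow> 'n \<Rightarrow> real^'n \<Rightarrow> real \<times> (real^'n) \<times> real \<times> real" where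
  "lift_point a0 a i j z = (1, z, z $ i * (a0 + a \<bullet> z), z $ j * (a0 + a \<bullet> z))"

definition denominator :: "real \<Rightarrow> real^'n \<Rightarrow> real \<times> (real^'n) \<times> real \<times> real \<Rightarrow> real" where
  "denominator a0 a p = a0 * fst p + a \<bullet> fst (snd p)"

lemma linear_denominator: "linear (denominator a0 a)"
  by (rule linearI) (simp_all add: denominator_def inner_add_right algebra_simps)

lemma G2_eq_normalized_lift_points:
  fixes a :: "real^'n"
  assumes "\<forall>x\<in>binary_points. a0 + a \<bullet> x > 0"
  shows "G2 a0 a i j = (\<lambda>p. (1 / denominator a0 a p) *\<^sub>R p) ` lift_point a0 a i j ` binary_points"
  unfolding G2_def image_image
proof (rule image_cong[OF refl])
  fix x :: "real^'n" assume "x \<in> binary_points"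
  with assms have "a0 + a \<bullet> x \<noteq> 0"
    by force
  then show "(1 / (a0 + a \<bullet> x), (1 / (a0 + a \<bullet> x)) *\<^sub>R x, x $ i, x $ j)
      = (1 / denominator a0 a (lift_point a0 a i j x)) *\<^sub>R lift_point a0 a i j x"
    by (simp add: lift_point_def denominator_def)
qed

lemma mem_convex_hull_normalized:
  fixes l :: "'a::real_vector \<Rightarrow> real"
  assumes l: "linear l" and pos: "\<And>q. q \<in> F \<Longrightarrow> 0 < l q" and p: "p \<in> convex hull F"
  shows "(1 / l p) *\<^sub>R p \<in> convex hull ((\<lambda>q. (1 / l q) *\<^sub>R q) ` F)"
proof -
  obtain S u where S: "finite S" "S \<subseteq> F" and u: "\<forall>q\<in>S. 0 \<le> u q" "sum u S = 1"
    and p_eq: "(\<Sum>q\<in>S. u q *\<^sub>R q) = p"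
    using p unfolding convex_hull_explicit by blast
  have lp: "l p = (\<Sum>q\<in>S. u q * l q)"
    unfolding p_eq[symmetric] linear_sum[OF l] linear_scale[OF l] by simp
  have lS: "0 < l q" if "q \<in> S" for q
    using that S pos by blast
  obtain q0 where "q0 \<in> S" "0 < u q0"
    using u sum_nonpos[of S u] by (metis linorder_not_less zero_less_one order.refl)
  then have "0 < l p"
    unfolding lp using S(1) u lS by (intro sum_pos2[of S q0]) (simp_all add: less_imp_le)
  have "(1 / l p) *\<^sub>R p = (\<Sum>q\<in>S. (u q * l q / l p) *\<^sub>R ((1 / l q) *\<^sub>R q))"
    unfolding p_eq[symmetric] scaleR_sum_right using S pos
    by (intro sum.cong) (auto simp: less_imp_neq[symmetric])
  also have "\<dots> \<in> convex hull ((\<lambda>q. (1 / l q) *\<^sub>R q) ` F)"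
  proof (rule convex_sum[OF S(1) convex_convex_hull])
    show "(\<Sum>q\<in>S. u q * l q / l p) = 1"
      using \<open>0 < l p\<close> by (simp add: lp sum_divide_distrib[symmetric])
    show "0 \<le> u q * l q / l p" if "q \<in> S" for q
      using that u lS[OF that] \<open>0 < l p\<close> by (intro divide_nonneg_pos mult_nonneg_nonneg) simp_all
    show "(1 / l q) *\<^sub>R q \<in> convex hull ((\<lambda>q. (1 / l q) *\<^sub>R q) ` F)" if "q \<in> S" for q
      using that S by (intro hull_inc) auto
  qed
  finally show ?thesis .
qed

lemma convex_hull_binary_points: "convex hull binary_points = cbox (0::real^'n) 1"
  using unit_interval_convex_hull[where 'a="real^'n"]
  by (simp add: binary_points_def Basis_vec_def inner_axis Cart_1 box_real)

lemma lift_point_mem_convex_hull: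
  fixes a :: "real^'n"
  assumes z: "z \<in> cbox 0 1" and zi: "z $ i \<in> {0, 1}" and zj: "z $ j \<in> {0, 1}" and "i \<noteq> j"
  shows "lift_point a0 a i j z \<in> convex hull (lift_point a0 a i j ` binary_points)"
proof -
  \<comment> \<open>On the face where \<open>z\<^sub>i\<close> and \<open>z\<^sub>j\<close> are fixed, \<open>lift_point\<close> is affine.\<close>
  define T :: "real^'n \<Rightarrow> real^'n" where "T x = (\<chi> k. if k = i \<or> k = j then 0 else x $ k)" for x
  define B :: "real^'n" where "B = z - T z"
  define M where "M x = (0::real, T x, z $ i * (a \<bullet> T x), z $ j * (a \<bullet> T x))" for x
  have "linear T"
    by (rule linearI) (simp_all add: T_def vec_eq_iff)
  have "linear M"
    unfolding M_def
    by (rule linearI) (simp_all add: linear_add[OF \<open>linear T\<close>] linear_scale[OF \<open>linear T\<close>] inner_add_right algebra_simps)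
  have lift_face: "lift_point a0 a i j (B + T x) = lift_point a0 a i j B + M x" for x
    using \<open>i \<noteq> j\<close> by (simp add: lift_point_def M_def B_def T_def inner_add_right algebra_simps)
  have "z \<in> convex hull binary_points"
    using z by (simp add: convex_hull_binary_points)
  then have "M z \<in> convex hull (M ` binary_points)"
    unfolding convex_hull_linear_image[OF \<open>linear M\<close>, symmetric] by blast
  then have "lift_point a0 a i j B + M z \<in> convex hull ((\<lambda>x. lift_point a0 a i j B + M x) ` binary_points)"
    using convex_hull_translation[of "lift_point a0 a i j B" "M ` binary_points"] by (auto simp: image_image)
  also have "\<dots> \<subseteq> convex hull (lift_point a0 a i j ` binary_points)"
  proof (rule hull_mono, rule image_subsetI)
    fix x :: "real^'n" assume "x \<in> binary_points"
    then have "B + T x \<in> binary_points"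
      using zi zj by (auto simp: binary_points_def B_def T_def)
    then show "lift_point a0 a i j B + M x \<in> lift_point a0 a i j ` binary_points"
      unfolding lift_face[symmetric] by blast
  qed
  finally show ?thesis
    using lift_face[of z] by (simp add: B_def)
qed

lemma scaled_lift_point_mem_convex_hull:
  fixes a :: "real^'n"
  assumes "0 \<le> \<pi>" and m: "\<And>k. 0 \<le> m $ k \<and> m $ k \<le> \<pi>" and "c \<in> {0, 1}" "d \<in> {0, 1}"
    and mi: "m $ i = c * \<pi>" and mj: "m $ j = d * \<pi>" and "i \<noteq> j"
  shows "\<exists>q. q \<in> convex hull (lift_point a0 a i j ` binary_points) \<and>
    \<pi> *\<^sub>R q = (\<pi>, m, c * (a0 * \<pi> + a \<bullet> m), d * (a0 * \<pi> + a \<bullet> m))"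
proof (cases "\<pi> = 0")
  case True
  then have "m = 0"
    using m by (simp add: vec_eq_iff order_antisym)
  have "lift_point a0 a i j 0 \<in> convex hull (lift_point a0 a i j ` binary_points)"
    by (intro hull_inc imageI) (simp add: binary_points_def)
  then show ?thesis
    using True \<open>m = 0\<close> by (intro exI[of _ "lift_point a0 a i j 0"]) (simp add: zero_prod_def)
next
  case False
  with \<open>0 \<le> \<pi>\<close> have "0 < \<pi>"
    by simp
  define z where "z = (1 / \<pi>) *\<^sub>R m"
  have "z \<in> cbox 0 1"
    unfolding mem_box_cart(2) z_def using m \<open>0 < \<pi>\<close> by simp
  moreover have "z $ i = c" "z $ j = d"
    using mi mj \<open>0 < \<pi>\<close> by (simp_all add: z_def)
  ultimately have "lift_point a0 a i j z \<in> convex hull (lift_point a0 a i j ` binary_points)"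
    using \<open>c \<in> {0, 1}\<close> \<open>d \<in> {0, 1}\<close> \<open>i \<noteq> j\<close> by (intro lift_point_mem_convex_hull) auto
  moreover have "\<pi> *\<^sub>R z = m" "\<pi> * (a0 + a \<bullet> z) = a0 * \<pi> + a \<bullet> m"
    using \<open>0 < \<pi>\<close> by (simp_all add: z_def algebra_simps)
  ultimately show ?thesis
    using \<open>z $ i = c\<close> \<open>z $ j = d\<close> by (intro exI[of _ "lift_point a0 a i j z"]) (simp add: lift_point_def)
qed
lemma sum_unit_square:
  "(\<Sum>s\<in>{0, 1 :: real} \<times> {0, 1 :: real}. f s) = f (0, 0) + f (0, 1) + f (1, 0) + (f (1, 1) :: 'a::comm_monoid_add)"
  by (simp add: sum.Sigma[symmetric] ac_simps)

text \<open>\<open>\<tau>\<close> is a candidate value of the cubic moment \<open>w\<^sub>i\<^sub>j\<^sub>k\<close>; the eight quantities are the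
  masses of the atoms of \<open>{0,1}\<^sup>3\<close> under a measure with the given moments.\<close>
definition cubic_moment_feasible ::
    "real \<Rightarrow> real \<Rightarrow> real \<Rightarrow> real \<Rightarrow> real \<Rightarrow> real \<Rightarrow> real \<Rightarrow> real \<Rightarrow> bool" where
  "cubic_moment_feasible \<rho> yi yj yk wij wik wjk \<tau> \<longleftrightarrow>
     0 \<le> \<tau> \<and> 0 \<le> wij - \<tau> \<and> 0 \<le> wik - \<tau> \<and> 0 \<le> wjk - \<tau> \<and>
     0 \<le> yi - wij - wik + \<tau> \<and> 0 \<le> yj - wij - wjk + \<tau> \<and> 0 \<le> yk - wik - wjk + \<tau> \<and>
     0 \<le> \<rho> - yi - yj - yk + wij + wik + wjk - \<tau>"

lemma triangle_lifting:
  assumes "mccormick_ineqs \<rho> yi yj wij" "mccormick_ineqs \<rho> yi yk wik" "mccormick_ineqs \<rho> yj yk wjk"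
    and "triangle_ineqs \<rho> yi yj yk wij wjk wik"
  shows "\<exists>\<tau>. cubic_moment_feasible \<rho> yi yj yk wij wik wjk \<tau>"
proof -
  define \<tau> where "\<tau> = max (max 0 (wij + wik - yi)) (max (wij + wjk - yj) (wik + wjk - yk))"
  have below: "\<tau> \<le> U" if "0 \<le> U" "wij + wik - yi \<le> U" "wij + wjk - yj \<le> U" "wik + wjk - yk \<le> U" for U
    using that unfolding \<tau>_def by (simp add: max.bounded_iff)
  have "\<tau> \<le> wij" "\<tau> \<le> wik" "\<tau> \<le> wjk" "\<tau> \<le> \<rho> - yi - yj - yk + wij + wik + wjk"
    using assms unfolding mccormick_ineqs_def triangle_ineqs_def by (intro below; linarith)+
  moreover have "0 \<le> \<tau>" "wij + wik - yi \<le> \<tau>" "wij + wjk - yj \<le> \<tau>" "wik + wjk - yk \<le> \<tau>"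
    unfolding \<tau>_def by (simp_all add: le_max_iff_disj)
  ultimately have "cubic_moment_feasible \<rho> yi yj yk wij wik wjk \<tau>"
    unfolding cubic_moment_feasible_def by (intro conjI; linarith)
  then show ?thesis ..
qed

lemma extended_form_mccormick:
  assumes "extended_form a0 a i j \<rho> y xi xj w" and "u \<in> {i, j}" "u \<noteq> v"
  shows "mccormick_ineqs \<rho> (y $ u) (y $ v) (w {u, v})"
proof -
  have "{u, v} \<in> E {i, j}"
    using assms(2,3) unfolding E_def by blast
  then show ?thesis
    using assms(1) unfolding extended_form_def by blast
qed

lemma extended_form_cubic_moments:
  assumes ext: "extended_form a0 a i j \<rho> y xi xj w" and "i \<noteq> j"
  obtains \<tau> where "\<And>k. k \<notin> {i, j} \<Longrightarrow>
    cubic_moment_feasible \<rho> (y $ i) (y $ j) (y $ k) (w {i, j}) (w {i, k}) (w {j, k}) (\<tau> k)"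
proof -
  have "\<exists>\<tau>. cubic_moment_feasible \<rho> (y $ i) (y $ j) (y $ k) (w {i, j}) (w {i, k}) (w {j, k}) \<tau>"
    if "k \<notin> {i, j}" for k
  proof (rule triangle_lifting)
    show "triangle_ineqs \<rho> (y $ i) (y $ j) (y $ k) (w {i, j}) (w {j, k}) (w {i, k})"
      using ext that unfolding extended_form_def by blast
  qed (use extended_form_mccormick[OF ext] that \<open>i \<noteq> j\<close> in auto)
  then show thesis
    using that by metis
qed

lemma extended_form_rho_pos:
  assumes ext: "extended_form a0 a i j \<rho> y xi xj w" and "i \<noteq> j"
  shows "0 < \<rho>"
proof (rule ccontr)
  assume "\<not> 0 < \<rho>"
  with ext have "\<rho> = 0"
    by (simp add: extended_form_def)
  have "y $ u = 0" for u
  proof -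
    obtain v where "v \<noteq> i" "u \<in> {i, v}"
      using that[of j] that[of u] \<open>i \<noteq> j\<close> by (cases "u = i") auto
    then have "mccormick_ineqs 0 (y $ i) (y $ v) (w {i, v})"
      using extended_form_mccormick[OF ext, of i v] \<open>\<rho> = 0\<close> by simp
    then show ?thesis
      using \<open>u \<in> {i, v}\<close> unfolding mccormick_ineqs_def by auto
  qed
  then have "y = 0"
    by (simp add: vec_eq_iff)
  with ext \<open>\<rho> = 0\<close> show False
    by (simp add: extended_form_def)
qed

lemma extended_form_moment_table:
  fixes a :: "real^'n"
  assumes ext: "extended_form a0 a i j \<rho> y xi xj w" and "i \<noteq> j"
  obtains P :: "real \<times> real \<Rightarrow> real" and m :: "real \<times> real \<Rightarrow> real^'n"
  where "\<And>s. s \<in> {0, 1} \<times> {0, 1} \<Longrightarrow>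
      0 \<le> P s \<and> (\<forall>k. 0 \<le> m s $ k \<and> m s $ k \<le> P s) \<and> m s $ i = fst s * P s \<and> m s $ j = snd s * P s"
    and "(\<Sum>s\<in>{0, 1 :: real} \<times> {0, 1}. P s) = \<rho>" "(\<Sum>s\<in>{0, 1 :: real} \<times> {0, 1}. m s) = y"
    and "m (1, 0) + m (1, 1) = moment_row y w i" "m (0, 1) + m (1, 1) = moment_row y w j"
proof -
  obtain \<tau> where \<tau>: "\<And>k. k \<notin> {i, j} \<Longrightarrow>
      cubic_moment_feasible \<rho> (y $ i) (y $ j) (y $ k) (w {i, j}) (w {i, k}) (w {j, k}) (\<tau> k)"
    using extended_form_cubic_moments[OF ext \<open>i \<noteq> j\<close>] by blast
  \<comment> \<open>\<open>P s\<close> is the mass of the event \<open>(x\<^sub>i, x\<^sub>j) = s\<close> and \<open>m s\<close> the first moment restricted to it.\<close>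
  define P where "P s = (if s = (1, 1) then w {i, j} else if s = (1, 0) then y $ i - w {i, j}
      else if s = (0, 1) then y $ j - w {i, j} else \<rho> - y $ i - y $ j + w {i, j})" for s :: "real \<times> real"
  define m where "m s = (\<chi> k. if k = i then fst s * P s else if k = j then snd s * P s
      else if s = (1, 1) then \<tau> k else if s = (1, 0) then w {i, k} - \<tau> k
      else if s = (0, 1) then w {j, k} - \<tau> k else y $ k - w {i, k} - w {j, k} + \<tau> k)" for s :: "real \<times> real"
  show thesis
  proof (rule that)
    fix s :: "real \<times> real" assume "s \<in> {0, 1} \<times> {0, 1}"
    then consider "s = (0, 0)" | "s = (0, 1)" | "s = (1, 0)" | "s = (1, 1)"
      by blast
    note s_cases = this
    have "0 \<le> P s"
      using extended_form_mccormick[OF ext, of i j] \<open>i \<noteq> j\<close> unfolding mccormick_ineqs_def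
      by (cases rule: s_cases) (simp_all add: P_def)
    moreover have "0 \<le> m s $ k \<and> m s $ k \<le> P s" for k
    proof (cases "k \<in> {i, j}")
      case True
      then have "m s $ k = fst s * P s \<or> m s $ k = snd s * P s"
        by (auto simp: m_def)
      then show ?thesis
        using \<open>0 \<le> P s\<close> by (cases rule: s_cases) auto
    next
      case False
      then show ?thesis
        using \<tau>[OF False] unfolding cubic_moment_feasible_def
        by (cases rule: s_cases) (simp_all add: m_def P_def)
    qed
    ultimately show "0 \<le> P s \<and> (\<forall>k. 0 \<le> m s $ k \<and> m s $ k \<le> P s) \<and> m s $ i = fst s * P s \<and> m s $ j = snd s * P s"
      using \<open>i \<noteq> j\<close> by (simp add: m_def)
  next
    show "(\<Sum>s\<in>{0, 1 :: real} \<times> {0, 1}. P s) = \<rho>"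
      by (simp add: sum_unit_square P_def)
    show "(\<Sum>s\<in>{0, 1 :: real} \<times> {0, 1}. m s) = y"
      using \<open>i \<noteq> j\<close> by (simp add: sum_unit_square vec_eq_iff m_def P_def)
    show "m (1, 0) + m (1, 1) = moment_row y w i" "m (0, 1) + m (1, 1) = moment_row y w j"
      using \<open>i \<noteq> j\<close> by (simp_all add: vec_eq_iff m_def P_def moment_row_def insert_commute)
  qed
qed

lemma conic_combination_mem_convex_hull_normalized:
  fixes l :: "'a::real_vector \<Rightarrow> real"
  assumes l: "linear l" and pos: "\<And>q. q \<in> F \<Longrightarrow> 0 < l q" and "finite S"
    and c: "\<And>s. s \<in> S \<Longrightarrow> 0 \<le> c s \<and> g s \<in> convex hull F" and "0 < sum c S"
    and one: "l (\<Sum>s\<in>S. c s *\<^sub>R g s) = 1"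
  shows "(\<Sum>s\<in>S. c s *\<^sub>R g s) \<in> convex hull ((\<lambda>q. (1 / l q) *\<^sub>R q) ` F)"
proof -
  define Q where "Q = (1 / sum c S) *\<^sub>R (\<Sum>s\<in>S. c s *\<^sub>R g s)"
  have "Q = (\<Sum>s\<in>S. (c s / sum c S) *\<^sub>R g s)"
    by (simp add: Q_def scaleR_sum_right)
  also have "\<dots> \<in> convex hull F"
    using \<open>finite S\<close> c \<open>0 < sum c S\<close>
    by (intro convex_sum convex_convex_hull) (simp_all add: sum_divide_distrib[symmetric])
  finally have "(1 / l Q) *\<^sub>R Q \<in> convex hull ((\<lambda>q. (1 / l q) *\<^sub>R q) ` F)"
    using l pos by (rule mem_convex_hull_normalized[rotated 2])
  moreover have "l Q = 1 / sum c S"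
    unfolding Q_def linear_scale[OF l] one by simp
  ultimately show ?thesis
    using \<open>0 < sum c S\<close> by (simp add: Q_def)
qed

lemma extended_form_conic_decomposition:
  fixes a :: "real^'n"
  assumes ext: "extended_form a0 a i j \<rho> y xi xj w" and "i \<noteq> j"
  obtains P :: "real \<times> real \<Rightarrow> real" and q
  where "\<And>s. s \<in> {0, 1} \<times> {0, 1} \<Longrightarrow> 0 \<le> P s \<and> q s \<in> convex hull (lift_point a0 a i j ` binary_points)"
    and "(\<Sum>s\<in>{0, 1 :: real} \<times> {0, 1}. P s) = \<rho>"
    and "(\<Sum>s\<in>{0, 1 :: real} \<times> {0, 1}. P s *\<^sub>R q s) = (\<rho>, y, xi, xj)"
proof -
  obtain P m where table: "\<And>s. s \<in> {0, 1} \<times> {0, 1} \<Longrightarrow>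
      0 \<le> P s \<and> (\<forall>k. 0 \<le> m s $ k \<and> m s $ k \<le> P s) \<and> m s $ i = fst s * P s \<and> m s $ j = snd s * P s"
    and sum_P: "(\<Sum>s\<in>{0, 1 :: real} \<times> {0, 1}. P s) = \<rho>" and sum_m: "(\<Sum>s\<in>{0, 1 :: real} \<times> {0, 1}. m s) = y"
    and row_i: "m (1, 0) + m (1, 1) = moment_row y w i" and row_j: "m (0, 1) + m (1, 1) = moment_row y w j"
    using extended_form_moment_table[OF ext \<open>i \<noteq> j\<close>] by blast
  define h where "h s = a0 * P s + a \<bullet> m s" for s
  have "\<exists>q. q \<in> convex hull (lift_point a0 a i j ` binary_points) \<and>
      P s *\<^sub>R q = (P s, m s, fst s * h s, snd s * h s)" if s: "s \<in> {0, 1} \<times> {0, 1}" for s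
  proof -
    have "fst s \<in> {0, 1}" "snd s \<in> {0, 1}"
      using s by auto
    with table[OF s] \<open>i \<noteq> j\<close> show ?thesis
      unfolding h_def by (intro scaled_lift_point_mem_convex_hull) auto
  qed
  then obtain q where q: "\<And>s. s \<in> {0, 1} \<times> {0, 1} \<Longrightarrow>
      q s \<in> convex hull (lift_point a0 a i j ` binary_points) \<and> P s *\<^sub>R q s = (P s, m s, fst s * h s, snd s * h s)"
    by metis
  have "y $ i = P (1, 0) + P (1, 1)" "y $ j = P (0, 1) + P (1, 1)"
    using arg_cong[OF row_i, of "\<lambda>v. v $ i"] arg_cong[OF row_j, of "\<lambda>v. v $ j"]
      table[of "(1, 0)"] table[of "(1, 1)"] table[of "(0, 1)"]
    by (simp_all add: moment_row_def)
  moreover have "xi = a0 * y $ i + a \<bullet> moment_row y w i" "xj = a0 * y $ j + a \<bullet> moment_row y w j"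
    using ext unfolding extended_form_def by blast+
  ultimately have "xi = h (1, 0) + h (1, 1)" "xj = h (0, 1) + h (1, 1)"
    unfolding h_def row_i[symmetric] row_j[symmetric] by (simp_all add: inner_add_right algebra_simps)
  have "(\<Sum>s\<in>{0, 1 :: real} \<times> {0, 1}. P s *\<^sub>R q s) = (\<Sum>s\<in>{0, 1 :: real} \<times> {0, 1}. (P s, m s, fst s * h s, snd s * h s))"
    using q by (intro sum.cong) auto
  also have "\<dots> = (\<rho>, y, xi, xj)"
    using sum_P sum_m \<open>xi = h (1, 0) + h (1, 1)\<close> \<open>xj = h (0, 1) + h (1, 1)\<close>
    unfolding sum_unit_square by (simp add: ac_simps)
  finally show thesis
    using table q sum_P by (intro that[of P q]) auto
qed

lemma S2_subset_convex_hull_G2: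
  fixes a :: "real^'n"
  assumes pos: "\<forall>x\<in>binary_points. a0 + a \<bullet> x > 0" and "i \<noteq> j"
  shows "S2 a0 a i j \<subseteq> convex hull (G2 a0 a i j)"
proof clarify
  fix \<rho> y xi xj assume "(\<rho>, y, xi, xj) \<in> S2 a0 a i j"
  then obtain w where ext: "extended_form a0 a i j \<rho> y xi xj w"
    unfolding mem_S2_iff by blast
  obtain P :: "real \<times> real \<Rightarrow> real" and q where Pq: "\<And>s. s \<in> {0, 1} \<times> {0, 1} \<Longrightarrow> 0 \<le> P s \<and> q s \<in> convex hull (lift_point a0 a i j ` binary_points)"
    and sum_P: "(\<Sum>s\<in>{0, 1 :: real} \<times> {0, 1}. P s) = \<rho>"
    and sum_Pq: "(\<Sum>s\<in>{0, 1 :: real} \<times> {0, 1}. P s *\<^sub>R q s) = (\<rho>, y, xi, xj)"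
    using extended_form_conic_decomposition[OF ext \<open>i \<noteq> j\<close>] by blast
  have "0 < (\<Sum>s\<in>{0, 1 :: real} \<times> {0, 1}. P s)"
    unfolding sum_P using extended_form_rho_pos[OF ext \<open>i \<noteq> j\<close>] .
  moreover have "denominator a0 a (\<Sum>s\<in>{0, 1 :: real} \<times> {0, 1}. P s *\<^sub>R q s) = 1"
    using ext unfolding sum_Pq extended_form_def denominator_def by simp
  moreover have "0 < denominator a0 a p" if "p \<in> lift_point a0 a i j ` binary_points" for p
    using that pos by (auto simp: denominator_def lift_point_def)
  ultimately have "(\<Sum>s\<in>{0, 1 :: real} \<times> {0, 1}. P s *\<^sub>R q s)
      \<in> convex hull ((\<lambda>p. (1 / denominator a0 a p) *\<^sub>R p) ` lift_point a0 a i j ` binary_points)"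
    by (intro conic_combination_mem_convex_hull_normalized[OF linear_denominator _ finite_SigmaI Pq])
      (simp_all only: finite_insert finite.emptyI)
  then show "(\<rho>, y, xi, xj) \<in> convex hull (G2 a0 a i j)"
    unfolding sum_Pq G2_eq_normalized_lift_points[OF pos] .
qed

theorem corollary1:
  fixes a0 :: real and a :: "real^'n" and i j :: 'n
  assumes "CARD('n) \<ge> 3"
    and "\<forall>x\<in>binary_points. a0 + a \<bullet> x > 0"
    and "i \<noteq> j"
  shows "convex hull (G2 a0 a i j) = S2 a0 a i j
     \<and> two_term_relaxation a0 a = \<Inter> {extend2 i' j' (S2 a0 a i' j') | i' j'. i' \<noteq> j'}"
proof -
  have hull_eq: "convex hull (G2 a0 a i' j') = S2 a0 a i' j'" if "i' \<noteq> j'" for i' j'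
    using convex_hull_G2_subset_S2[OF assms(2) that] S2_subset_convex_hull_G2[OF assms(2) that]
    by (rule antisym)
  then have "{extend2 i' j' (convex hull (G2 a0 a i' j')) | i' j'. i' \<noteq> j'}
      = {extend2 i' j' (S2 a0 a i' j') | i' j'. i' \<noteq> j'}"
    by metis
  with hull_eq[OF assms(3)] show ?thesis
    unfolding two_term_relaxation_def by simp
qed

end
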